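(* Let $A\in\mathbb{R}^{n\times n}$, $\bm{g}\in\mathbb{R}^n$, and let $\bm{y}$ be a solution of $\bm{y}''(t)=-A\bm{y}(t)+\bm{g}$ on $\mathbb{R}$. Then for all $t\in\mathbb{R}$ and $\delta>0$, $$\bm{y}(t+\delta)-2\bm{y}(t)+\bm{y}(t-\delta)=\delta^2\psi(\delta^2A)\big(-A\bm{y}(t)+\bm{g}\big).$$ Consequently, for $\bm{y}$ with $\bm{y}(0)=\bm{u}$, $\bm{y}'(0)=\bm{v}$, the one-step scheme $\bm{y}_0=\bm{u}$, $\bm{v}_0=\sigma(\delta^2A)\bm{v}$, $\bm{v}_{k+1/2}=\bm{v}_k+\tfrac12\delta\psi(\delta^2A)(-A\bm{y}_k+\bm{g})$, $\bm{y}_{k+1}=\bm{y}_k+\delta\bm{v}_{k+1/2}$, $\bm{v}_{k+1}=\bm{v}_{k+1/2}+\tfrac12\delta\psi(\delta^2A)(-A\bm{y}_{k+1}+\bm{g})$ produces $\bm{y}_k=\bm{y}(k\delta)$ for all $k\ge0$.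
   Context: $\psi$ and $\sigma$ are the entire functions determined by $\psi(x^2)=2(1-\cos x)/x^2$ and $\sigma(x^2)=\sin(x)/x$ (with $\psi(0)=\sigma(0)=1$); matrix functions are defined via their power series. *)

theory Defs
  imports "HOL-Analysis.Analysis"
begin

primrec mat_pow :: "real^'n^'n \<Rightarrow> nat \<Rightarrow> real^'n^'n" where
  "mat_pow A 0 = mat 1"
| "mat_pow A (Suc k) = A ** mat_pow A k"

text \<open>psi(x) = sum_k 2(-1)^k x^k/(2k+2)!, so that psi(x^2) = 2(1 - cos x)/x^2, psi(0)=1.
  The matrix function is defined through the power series.\<close>
definition psi_mat :: "real^'n^'n \<Rightarrow> real^'n^'n" where
  "psi_mat A = (\<Sum>k. (2 * (-1)^k / fact (2*k+2)) *\<^sub>R mat_pow A k)"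

text \<open>sigma(x) = sum_k (-1)^k x^k/(2k+1)!, so that sigma(x^2) = sin x / x, sigma(0)=1.\<close>
definition sigma_mat :: "real^'n^'n \<Rightarrow> real^'n^'n" where
  "sigma_mat A = (\<Sum>k. ((-1)^k / fact (2*k+1)) *\<^sub>R mat_pow A k)"

end

theory Submission
  imports Defs
begin

text \<open>The solution is entire: its derivatives are y^(2k+1) = (-A)^k y' and
  y^(2k+2) = (-A)^k (-A y + g), so they grow at most geometrically and y(t+h) is the sum of its
  Taylor series at t. In y(t+h) + y(t-h) only the even terms survive and sum to
  2 y(t) + h^2 \<psi>(h^2 A)(-A y(t) + g); in y(t+h) - y(t-h) only the odd ones, giving
  2h \<sigma>(h^2 A) y'(t). Eliminating the velocities turns the scheme into the two-step recurrence
  y(k+2) = 2 y(k+1) - y(k) + \<delta>^2 \<psi>(\<delta>^2 A)(-A y(k+1) + g), which the exact samples satisfy by the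
  first identity, and the two identities together make the first step exact.\<close>

lemma bounded_linear_matrix_vector_mult_left: "bounded_linear (\<lambda>M::real^'n^'m. M *v x)"
  by (intro linear_conv_bounded_linear[THEN iffD1] linearI)
    (simp_all add: matrix_vector_mult_add_rdistrib scaleR_matrix_vector_assoc)

lemma sums_group_pairs: "f sums s \<Longrightarrow> (\<lambda>n. f (2 * n) + f (2 * n + 1)) sums s"
  using sums_group[of f s 2] by (simp add: mult.commute)

lemma mat_pow_scaleR: "mat_pow (c *\<^sub>R A) k = c ^ k *\<^sub>R mat_pow A k"
  by (induction k) (simp_all add: matrix_scalar_ac scalar_matrix_assoc[symmetric])

lemma onorm_mat_pow_le:
  fixes B :: "real^'n^'n"
  shows "onorm ((*v) (mat_pow B k)) \<le> onorm ((*v) B) ^ k"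
proof (induction k)
  case 0
  show ?case by (simp add: onorm_id_le)
next
  case (Suc k)
  have "(*v) (mat_pow B (Suc k)) = (*v) B \<circ> (*v) (mat_pow B k)"
    by (simp add: fun_eq_iff matrix_vector_mul_assoc)
  then have "onorm ((*v) (mat_pow B (Suc k))) \<le> onorm ((*v) B) * onorm ((*v) (mat_pow B k))"
    by (simp add: onorm_compose matrix_vector_mul_bounded_linear)
  also have "\<dots> \<le> onorm ((*v) B) * onorm ((*v) B) ^ k"
    by (intro mult_left_mono Suc onorm_pos_le matrix_vector_mul_bounded_linear)
  finally show ?case by simp
qed

lemma norm_matrix_le_onorm:
  fixes M :: "real^'n^'m"
  shows "norm M \<le> real CARD('m) * real CARD('n) * onorm ((*v) M)"
proof -
  have "norm M \<le> (\<Sum>i\<in>UNIV. norm (M $ i))"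
    by (simp add: norm_vec_def L2_set_le_sum)
  also have "\<dots> \<le> (\<Sum>i\<in>(UNIV::'m set). \<Sum>j\<in>(UNIV::'n set). onorm ((*v) M))"
    by (intro sum_mono order_trans[OF norm_le_l1_cart] matrix_component_le_onorm)
  finally show ?thesis by simp
qed

lemma summable_mat_pow_series:
  fixes B :: "real^'n^'n"
  assumes "\<And>k. \<bar>c k\<bar> \<le> 1 / fact k"
  shows "summable (\<lambda>k. c k *\<^sub>R mat_pow B k)"
proof (rule summable_comparison_test)
  define C where "C = real CARD('n) * real CARD('n)"
  define K where "K = onorm ((*v) B)"
  show "summable (\<lambda>k. C * (K ^ k / fact k))"
    using summable_exp[of K] by (simp add: divide_inverse mult.commute)
  have "norm (c k *\<^sub>R mat_pow B k) \<le> C * (K ^ k / fact k)" for k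
  proof -
    have "norm (c k *\<^sub>R mat_pow B k) \<le> (1 / fact k) * (C * K ^ k)"
      unfolding norm_scaleR C_def K_def
      by (intro mult_mono assms order_trans[OF norm_matrix_le_onorm] mult_left_mono
          onorm_mat_pow_le) simp_all
    then show ?thesis by simp
  qed
  then show "\<exists>N. \<forall>k\<ge>N. norm (c k *\<^sub>R mat_pow B k) \<le> C * (K ^ k / fact k)"
    by blast
qed

lemma psi_mat_sums: "(\<lambda>k. (2 * (-1) ^ k / fact (2 * k + 2)) *\<^sub>R mat_pow B k) sums psi_mat B"
proof -
  have "\<bar>2 * (-1) ^ k / fact (2 * k + 2)\<bar> \<le> (1::real) / fact k" for k
  proof -
    have "2 * fact k \<le> (2 * real k + 2) * fact (2 * k + 1)"
      by (intro mult_mono fact_mono) simp_all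
    then have "2 / fact (2 * k + 2) \<le> 2 / (2 * fact k :: real)"
      by (intro frac_le) (simp_all add: algebra_simps)
    then show ?thesis by (simp add: abs_mult power_abs)
  qed
  then show ?thesis
    unfolding psi_mat_def by (intro summable_sums summable_mat_pow_series)
qed

lemma sigma_mat_sums: "(\<lambda>k. ((-1) ^ k / fact (2 * k + 1)) *\<^sub>R mat_pow B k) sums sigma_mat B"
proof -
  have "\<bar>(-1) ^ k / fact (2 * k + 1)\<bar> \<le> (1::real) / fact k" for k
    using frac_le[of 1 1 "fact k" "fact (2 * k + 1)"] fact_mono[of k "2 * k + 1", where 'a=real]
    by (simp add: abs_mult power_abs)
  then show ?thesis
    unfolding sigma_mat_def by (intro summable_sums summable_mat_pow_series)
qed

lemma taylor_series_sums_real: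
  fixes f :: "nat \<Rightarrow> real \<Rightarrow> real"
  assumes deriv: "\<And>m x. (f m has_real_derivative f (Suc m) x) (at x)"
    and bound: "\<And>m x. \<bar>x - t\<bar> \<le> \<bar>h\<bar> \<Longrightarrow> \<bar>f m x\<bar> \<le> M * K ^ m"
    and "0 \<le> K"
  shows "(\<lambda>m. f m t / fact m * h ^ m) sums f 0 (t + h)"
proof -
  define R where "R n = f 0 (t + h) - (\<Sum>m<n. f m t / fact m * h ^ m)" for n
  have "\<bar>R n\<bar> \<le> M * ((K * \<bar>h\<bar>) ^ n / fact n)" for n
  proof -
    have "DERIV (\<lambda>x. f m (t + x)) x :> f (Suc m) (t + x)" for m x
      using DERIV_chain2[OF deriv DERIV_add[OF DERIV_const DERIV_ident]] by simp
    then obtain \<theta> where "\<bar>\<theta>\<bar> \<le> \<bar>h\<bar>" and "R n = f n (t + \<theta>) / fact n * h ^ n"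
      using Maclaurin_all_le[of "\<lambda>m x. f m (t + x)" "\<lambda>x. f 0 (t + x)" h n]
      unfolding R_def by auto
    then have "\<bar>R n\<bar> = \<bar>f n (t + \<theta>)\<bar> * (\<bar>h\<bar> ^ n / fact n)"
      by (simp add: abs_mult power_abs)
    also have "\<dots> \<le> M * K ^ n * (\<bar>h\<bar> ^ n / fact n)"
      using \<open>\<bar>\<theta>\<bar> \<le> \<bar>h\<bar>\<close> by (intro mult_right_mono bound) simp_all
    finally show ?thesis
      by (simp add: power_mult_distrib)
  qed
  moreover have "(\<lambda>n. M * ((K * \<bar>h\<bar>) ^ n / fact n)) \<longlonglongrightarrow> 0"
    using tendsto_mult_right_zero[OF summable_LIMSEQ_zero[OF summable_exp]]
    by (simp add: divide_inverse mult.commute)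
  ultimately have "R \<longlonglongrightarrow> 0"
    by (intro Lim_null_comparison[of R]) simp_all
  then have "(\<lambda>n. f 0 (t + h) - R n) \<longlonglongrightarrow> f 0 (t + h) - 0"
    by (intro tendsto_intros)
  then show ?thesis
    unfolding sums_def R_def by simp
qed

lemma taylor_series_sums_vec:
  fixes f :: "nat \<Rightarrow> real \<Rightarrow> real^'n"
  assumes deriv: "\<And>m x. (f m has_vector_derivative f (Suc m) x) (at x)"
    and bound: "\<And>m x. \<bar>x - t\<bar> \<le> \<bar>h\<bar> \<Longrightarrow> norm (f m x) \<le> M * K ^ m"
    and "0 \<le> K"
  shows "(\<lambda>m. (h ^ m / fact m) *\<^sub>R f m t) sums f 0 (t + h)"
proof -
  have "(\<lambda>m. f m t $ i / fact m * h ^ m) sums (f 0 (t + h) $ i)" for i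
  proof (rule taylor_series_sums_real[OF _ _ \<open>0 \<le> K\<close>])
    show "((\<lambda>x. f m x $ i) has_real_derivative f (Suc m) x $ i) (at x)" for m x
      unfolding has_real_derivative_iff_has_vector_derivative
      by (rule bounded_linear.has_vector_derivative[OF bounded_linear_vec_nth deriv])
    show "\<bar>f m x $ i\<bar> \<le> M * K ^ m" if "\<bar>x - t\<bar> \<le> \<bar>h\<bar>" for m x
      using component_le_norm_cart bound[OF that] by (rule order_trans)
  qed
  then show ?thesis
    unfolding sums_def by (intro vec_tendstoI) (simp add: sum_component mult.commute)
qed

lemma verlet_second_order_recurrence:
  fixes ys vs vh :: "nat \<Rightarrow> 'a::real_vector"
  assumes vh: "\<And>k. vh k = vs k + (\<delta> / 2) *\<^sub>R F (ys k)"
    and ys: "\<And>k. ys (Suc k) = ys k + \<delta> *\<^sub>R vh k"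
    and vs: "\<And>k. vs (Suc k) = vh k + (\<delta> / 2) *\<^sub>R F (ys (Suc k))"
  shows "ys (Suc (Suc k)) = 2 *\<^sub>R ys (Suc k) - ys k + \<delta>\<^sup>2 *\<^sub>R F (ys (Suc k))"
proof -
  have "vh (Suc k) = vh k + \<delta> *\<^sub>R F (ys (Suc k))"
    using vh[of "Suc k"] vs[of k] by (simp add: scaleR_add_left[symmetric])
  moreover have "\<delta> *\<^sub>R vh k = ys (Suc k) - ys k"
    using ys[of k] by simp
  ultimately show ?thesis
    using ys[of "Suc k"] by (simp add: algebra_simps power2_eq_square scaleR_2)
qed

lemma two_step_recurrence_unique:
  assumes "a 0 = b 0" "a 1 = b 1"
    and "\<And>k. a (Suc (Suc k)) = R (a k) (a (Suc k))"
    and "\<And>k. b (Suc (Suc k)) = R (b k) (b (Suc k))"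
  shows "a k = b k"
proof -
  have "a k = b k \<and> a (Suc k) = b (Suc k)"
    using assms(2) by (induction k) (simp_all add: assms(1,3,4))
  then show ?thesis ..
qed

locale linear_forced_ode =
  fixes A :: "real^'n^'n" and g :: "real^'n" and y y' :: "real \<Rightarrow> real^'n"
  assumes has_derivative_y: "\<And>t. (y has_vector_derivative y' t) (at t)"
    and has_derivative_y': "\<And>t. (y' has_vector_derivative (- (A *v y t) + g)) (at t)"
begin

fun higher_deriv :: "nat \<Rightarrow> real \<Rightarrow> real^'n" where
  "higher_deriv 0 = y"
| "higher_deriv (Suc 0) = y'"
| "higher_deriv (Suc (Suc 0)) = (\<lambda>s. - (A *v y s) + g)"
| "higher_deriv (Suc (Suc (Suc n))) = (\<lambda>s. - (A *v higher_deriv (Suc n) s))"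

lemma has_vector_derivative_higher_deriv:
  "(higher_deriv n has_vector_derivative higher_deriv (Suc n) t) (at t)"
proof (induction n arbitrary: t rule: higher_deriv.induct)
  case 1
  show ?case using has_derivative_y by simp
next
  case 2
  show ?case using has_derivative_y' by simp
next
  case 3
  show ?case
    using bounded_linear.has_vector_derivative[OF matrix_vector_mul_bounded_linear has_derivative_y]
    by (auto intro!: derivative_eq_intros)
next
  case (4 n)
  show ?case
    using bounded_linear.has_vector_derivative[OF matrix_vector_mul_bounded_linear "4.IH"]
    by (auto intro!: derivative_eq_intros)
qed

lemma higher_deriv_odd: "higher_deriv (2 * k + 1) s = (-1) ^ k *\<^sub>R (mat_pow A k *v y' s)"
  by (induction k)
    (simp_all add: numeral_2_eq_2 matrix_vector_mul_assoc[symmetric] matrix_vector_mult_scaleR)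

lemma higher_deriv_even:
  "higher_deriv (2 * k + 2) s = (-1) ^ k *\<^sub>R (mat_pow A k *v (- (A *v y s) + g))"
  by (induction k)
    (simp_all add: numeral_2_eq_2 matrix_vector_mul_assoc[symmetric] matrix_vector_mult_scaleR)

lemma norm_higher_deriv_le:
  assumes "1 \<le> K" and "\<And>x. norm (A *v x) \<le> K * norm x"
  shows "norm (higher_deriv n s) \<le> K ^ n * (norm (y s) + norm (y' s) + norm g)"
proof -
  define B where "B = norm (y s) + norm (y' s) + norm g"
  have K_mono: "x \<le> K * x" if "0 \<le> x" for x
    using mult_right_mono[OF \<open>1 \<le> K\<close> that] by simp
  have "norm (higher_deriv n s) \<le> K ^ n * B"
  proof (induction n rule: higher_deriv.induct)
    case 1
    show ?case by (simp add: B_def)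
  next
    case 2
    have "norm (y' s) \<le> B" by (simp add: B_def)
    moreover have "B \<le> K * B" by (rule K_mono) (simp add: B_def)
    ultimately show ?case by simp
  next
    case 3
    have "norm (- (A *v y s) + g) \<le> K * norm (y s) + norm g"
      using norm_triangle_ineq[of "- (A *v y s)" g] assms(2)[of "y s"] by simp
    also have "\<dots> \<le> K * B"
      using K_mono[OF norm_ge_zero, of g] K_mono[OF norm_ge_zero, of "y' s"] norm_ge_zero[of "y' s"]
      unfolding B_def distrib_left by linarith
    also have "\<dots> \<le> K * (K * B)"
      using \<open>1 \<le> K\<close> K_mono[of B] by (intro mult_left_mono) (simp_all add: B_def)
    finally show ?case by simp
  next
    case (4 n)
    have "norm (higher_deriv (Suc (Suc (Suc n))) s) \<le> K * norm (higher_deriv (Suc n) s)"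
      using assms(2) by simp
    also have "\<dots> \<le> K * (K ^ Suc n * B)"
      using "4.IH" \<open>1 \<le> K\<close> by (intro mult_left_mono) simp_all
    also have "\<dots> \<le> K * (K * (K ^ Suc n * B))"
      using \<open>1 \<le> K\<close> K_mono[of "K ^ Suc n * B"] by (intro mult_left_mono) (simp_all add: B_def)
    finally show ?case by simp
  qed
  then show ?thesis by (simp add: B_def)
qed

lemma taylor_series_sums: "(\<lambda>m. (h ^ m / fact m) *\<^sub>R higher_deriv m t) sums y (t + h)"
proof -
  define K where "K = max 1 (onorm ((*v) A))"
  have "1 \<le> K" by (simp add: K_def)
  have A_bound: "norm (A *v x) \<le> K * norm x" for x
    using onorm[OF matrix_vector_mul_bounded_linear, of A x]
    by (rule order_trans) (intro mult_right_mono, simp_all add: K_def)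
  define B where "B s = norm (y s) + norm (y' s) + norm g" for s
  have "continuous_on S y" "continuous_on S y'" for S
    using has_vector_derivative_continuous[OF has_derivative_y]
      has_vector_derivative_continuous[OF has_derivative_y']
    by (simp_all add: continuous_at_imp_continuous_on)
  then have "continuous_on (cball t \<bar>h\<bar>) B"
    unfolding B_def by (intro continuous_intros)
  then have "bounded (B ` cball t \<bar>h\<bar>)"
    by (intro compact_imp_bounded compact_continuous_image compact_cball)
  then obtain M where M: "\<And>s. s \<in> cball t \<bar>h\<bar> \<Longrightarrow> \<bar>B s\<bar> \<le> M"
    unfolding bounded_real by blast
  show ?thesis
  proof (rule taylor_series_sums_vec[of higher_deriv t h M K, unfolded higher_deriv.simps(1)])
    show "(higher_deriv m has_vector_derivative higher_deriv (Suc m) x) (at x)" for m x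
      by (rule has_vector_derivative_higher_deriv)
    show "norm (higher_deriv m x) \<le> M * K ^ m" if "\<bar>x - t\<bar> \<le> \<bar>h\<bar>" for m x
    proof -
      have "norm (higher_deriv m x) \<le> K ^ m * B x"
        unfolding B_def by (rule norm_higher_deriv_le[OF \<open>1 \<le> K\<close> A_bound])
      also have "\<dots> \<le> K ^ m * M"
        using M[of x] that \<open>1 \<le> K\<close> abs_minus_commute[of x t]
        by (intro mult_left_mono) (auto simp: dist_real_def)
      finally show ?thesis by (simp add: mult.commute)
    qed
  qed (use \<open>1 \<le> K\<close> in simp)
qed

lemma second_difference_eq:
  "y (t + h) - 2 *\<^sub>R y t + y (t - h) = h\<^sup>2 *\<^sub>R (psi_mat (h\<^sup>2 *\<^sub>R A) *v (- (A *v y t) + g))"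
proof -
  define w where "w = - (A *v y t) + g"
  define c where "c m = ((h ^ m + (- h) ^ m) / fact m) *\<^sub>R higher_deriv m t" for m
  have "c sums (y (t + h) + y (t - h))"
    using sums_add[OF taylor_series_sums[of h t] taylor_series_sums[of "- h" t]]
    unfolding c_def by (simp add: add_divide_distrib scaleR_add_left)
  then have "(\<lambda>k. c (2 * k)) sums (y (t + h) + y (t - h))"
    using sums_group_pairs[of c] by (simp add: c_def)
  then have even_sums: "(\<lambda>k. c (2 * k + 2)) sums (y (t + h) + y (t - h) - 2 *\<^sub>R y t)"
    using sums_Suc_iff[of "\<lambda>k. c (2 * k)"] by (simp add: c_def scaleR_2)
  have c_even: "c (2 * k + 2)
      = h\<^sup>2 *\<^sub>R (((2 * (-1) ^ k / fact (2 * k + 2)) *\<^sub>R mat_pow (h\<^sup>2 *\<^sub>R A) k) *v w)" for k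
    unfolding c_def higher_deriv_even w_def[symmetric]
    by (simp add: mat_pow_scaleR scaleR_matrix_vector_assoc[symmetric]
        power_mult power_add power2_eq_square)
  have psi_sums:
    "(\<lambda>k. h\<^sup>2 *\<^sub>R (((2 * (-1) ^ k / fact (2 * k + 2)) *\<^sub>R mat_pow (h\<^sup>2 *\<^sub>R A) k) *v w))
      sums (h\<^sup>2 *\<^sub>R (psi_mat (h\<^sup>2 *\<^sub>R A) *v w))"
    by (intro bounded_linear.sums[OF bounded_linear_compose[OF bounded_linear_scaleR_right
          bounded_linear_matrix_vector_mult_left]] psi_mat_sums)
  have "y (t + h) + y (t - h) - 2 *\<^sub>R y t = h\<^sup>2 *\<^sub>R (psi_mat (h\<^sup>2 *\<^sub>R A) *v w)"
    using even_sums psi_sums unfolding c_even by (rule sums_unique2)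
  then show ?thesis
    unfolding w_def[symmetric] by (simp add: algebra_simps)
qed

lemma central_difference_eq:
  "y (t + h) - y (t - h) = (2 * h) *\<^sub>R (sigma_mat (h\<^sup>2 *\<^sub>R A) *v y' t)"
proof -
  define c where "c m = ((h ^ m - (- h) ^ m) / fact m) *\<^sub>R higher_deriv m t" for m
  have "c sums (y (t + h) - y (t - h))"
    using sums_diff[OF taylor_series_sums[of h t] taylor_series_sums[of "- h" t]]
    unfolding c_def by (simp add: diff_divide_distrib scaleR_diff_left)
  then have odd_sums: "(\<lambda>k. c (2 * k + 1)) sums (y (t + h) - y (t - h))"
    using sums_group_pairs[of c] by (simp add: c_def)
  have c_odd: "c (2 * k + 1)
      = (2 * h) *\<^sub>R ((((-1) ^ k / fact (2 * k + 1)) *\<^sub>R mat_pow (h\<^sup>2 *\<^sub>R A) k) *v y' t)" for k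
    unfolding c_def higher_deriv_odd
    by (simp add: mat_pow_scaleR scaleR_matrix_vector_assoc[symmetric]
        power_mult power2_eq_square)
  have sigma_sums:
    "(\<lambda>k. (2 * h) *\<^sub>R ((((-1) ^ k / fact (2 * k + 1)) *\<^sub>R mat_pow (h\<^sup>2 *\<^sub>R A) k) *v y' t))
      sums ((2 * h) *\<^sub>R (sigma_mat (h\<^sup>2 *\<^sub>R A) *v y' t))"
    by (intro bounded_linear.sums[OF bounded_linear_compose[OF bounded_linear_scaleR_right
          bounded_linear_matrix_vector_mult_left]] sigma_mat_sums)
  show ?thesis
    using odd_sums sigma_sums unfolding c_odd by (rule sums_unique2)
qed

lemma exact_step_eq:
  "y (t + h) = y t + h *\<^sub>R (sigma_mat (h\<^sup>2 *\<^sub>R A) *v y' t)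
    + (h\<^sup>2 / 2) *\<^sub>R (psi_mat (h\<^sup>2 *\<^sub>R A) *v (- (A *v y t) + g))"
proof -
  have "2 *\<^sub>R y (t + h) = 2 *\<^sub>R y t + (y (t + h) - y (t - h)) + (y (t + h) - 2 *\<^sub>R y t + y (t - h))"
    by (simp add: algebra_simps scaleR_2)
  also have "\<dots> = 2 *\<^sub>R y t + (2 * h) *\<^sub>R (sigma_mat (h\<^sup>2 *\<^sub>R A) *v y' t)
      + h\<^sup>2 *\<^sub>R (psi_mat (h\<^sup>2 *\<^sub>R A) *v (- (A *v y t) + g))"
    by (simp only: second_difference_eq central_difference_eq)
  finally have "(1 / 2) *\<^sub>R (2 *\<^sub>R y (t + h)) = (1 / 2) *\<^sub>R (2 *\<^sub>R y t
      + (2 * h) *\<^sub>R (sigma_mat (h\<^sup>2 *\<^sub>R A) *v y' t)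
      + h\<^sup>2 *\<^sub>R (psi_mat (h\<^sup>2 *\<^sub>R A) *v (- (A *v y t) + g)))"
    by (rule arg_cong)
  then show ?thesis
    by (simp only: scaleR_add_right scaleR_scaleR) simp
qed

end

theorem mainTheorem7:
  fixes A :: "real^'n^'n" and g :: "real^'n"
    and y y' :: "real \<Rightarrow> real^'n"
  assumes dy: "\<And>t. (y has_vector_derivative y' t) (at t)"
    and ddy: "\<And>t. (y' has_vector_derivative (- (A *v y t) + g)) (at t)"
  shows "(\<forall>t \<delta>. \<delta> > 0 \<longrightarrow>
            y (t + \<delta>) - 2 *\<^sub>R y t + y (t - \<delta>)
              = \<delta>\<^sup>2 *\<^sub>R (psi_mat (\<delta>\<^sup>2 *\<^sub>R A) *v (- (A *v y t) + g)))
       \<and> (\<forall>\<delta> ys vs vh. \<delta> > 0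
            \<and> ys 0 = y 0
            \<and> vs 0 = sigma_mat (\<delta>\<^sup>2 *\<^sub>R A) *v y' 0
            \<and> (\<forall>k. vh k = vs k + (\<delta> / 2) *\<^sub>R (psi_mat (\<delta>\<^sup>2 *\<^sub>R A) *v (- (A *v ys k) + g)))
            \<and> (\<forall>k. ys (Suc k) = ys k + \<delta> *\<^sub>R vh k)
            \<and> (\<forall>k. vs (Suc k) = vh k + (\<delta> / 2) *\<^sub>R (psi_mat (\<delta>\<^sup>2 *\<^sub>R A) *v (- (A *v ys (Suc k)) + g)))
            \<longrightarrow> (\<forall>k. ys k = y (real k * \<delta>)))"
proof -
  interpret linear_forced_ode A g y y'
    using dy ddy by unfold_locales
  have "ys k = y (real k * \<delta>)"
    if ys0: "ys 0 = y 0" and vs0: "vs 0 = sigma_mat (\<delta>\<^sup>2 *\<^sub>R A) *v y' 0"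
      and vh: "\<forall>k. vh k = vs k + (\<delta> / 2) *\<^sub>R F (ys k)"
      and ys: "\<forall>k. ys (Suc k) = ys k + \<delta> *\<^sub>R vh k"
      and vs: "\<forall>k. vs (Suc k) = vh k + (\<delta> / 2) *\<^sub>R F (ys (Suc k))"
      and F: "F = (\<lambda>x. psi_mat (\<delta>\<^sup>2 *\<^sub>R A) *v (- (A *v x) + g))"
    for \<delta> ys vs vh k F
  proof (rule two_step_recurrence_unique[where R = "\<lambda>u v. 2 *\<^sub>R v - u + \<delta>\<^sup>2 *\<^sub>R F v"])
    show "ys (Suc (Suc k)) = 2 *\<^sub>R ys (Suc k) - ys k + \<delta>\<^sup>2 *\<^sub>R F (ys (Suc k))" for k
      using vh ys vs by (intro verlet_second_order_recurrence) auto
    show "y (real (Suc (Suc k)) * \<delta>)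
        = 2 *\<^sub>R y (real (Suc k) * \<delta>) - y (real k * \<delta>) + \<delta>\<^sup>2 *\<^sub>R F (y (real (Suc k) * \<delta>))" for k
      using second_difference_eq[of "real (Suc k) * \<delta>" \<delta>]
      by (simp add: F algebra_simps)
    have "ys 1 = y 0 + \<delta> *\<^sub>R (sigma_mat (\<delta>\<^sup>2 *\<^sub>R A) *v y' 0) + (\<delta>\<^sup>2 / 2) *\<^sub>R F (y 0)"
      using ys[rule_format, of 0] vh[rule_format, of 0]
      by (simp add: ys0 vs0 scaleR_add_right power2_eq_square)
    then show "ys 1 = y (real 1 * \<delta>)"
      using exact_step_eq[of 0 \<delta>] by (simp add: F)
  qed (use ys0 in simp)
  then show ?thesis
    by (auto simp: second_difference_eq)
qed

end
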